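(* Let $V,W$ be locally convex spaces, $\Omega\subset V$ open, and $D=d+A$ a connection on $\Omega\times W\to\Omega$. Let $I\subset\mathbb R$ be an interval. Suppose $x_n\in C^1(I,\Omega)$ converge in the $C^1$ topology to $x\colon I\to\Omega$ (i.e. $x_n\to x$ and $dx_n/dt\to dx/dt$ uniformly on $I$), and that parallel lifts $\xi_n\in C^1(I,W)$ of $x_n$ converge uniformly to $\xi\colon I\to W$. Then $\xi$ is $C^1$ and is a parallel lift of $x$.
   Context: All locally convex spaces are real, Hausdorff and sequentially complete. A connection on $\Omega\times W\to\Omega$ is the operator $D_\xi\varphi(v)=d\varphi(v,\xi)+A(v,\xi)\varphi(v)$ on $C^1$ maps $\varphi\colon\Omega\to W$, where the connection form $A\colon\Omega\times V\to\mathrm{Hom}(W,W)$ (continuous linear maps) is linear in $\xi$ and $(v,\xi,w)\mapsto A(v,\xi)w\in W$ is continuous. Given a $C^1$ curve $x\colon I\to\Omega$, a parallel lift of $x$ is a $C^1$ map $\xi\colon I\to W$ with $\frac{d\xi}{dt}+A\big(x,\frac{dx}{dt}\big)\xi=0$ on $I$. *)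

theory Defs
  imports "HOL-Analysis.Analysis"
begin

text \<open>Locally convex spaces are modelled by a real vector space together with a
  family of seminorms generating the topology.\<close>

definition seminorm :: "('a::real_vector \<Rightarrow> real) \<Rightarrow> bool" where
  "seminorm p \<longleftrightarrow> (\<forall>x. 0 \<le> p x) \<and> (\<forall>x y. p (x + y) \<le> p x + p y)
     \<and> (\<forall>c x. p (c *\<^sub>R x) = \<bar>c\<bar> * p x)"

definition lcs :: "('a::real_vector \<Rightarrow> real) set \<Rightarrow> bool" where
  "lcs P \<longleftrightarrow> P \<noteq> {} \<and> (\<forall>p\<in>P. seminorm p)
     \<and> (\<forall>x. x \<noteq> 0 \<longrightarrow> (\<exists>p\<in>P. p x \<noteq> 0))
     \<and> (\<forall>X::nat \<Rightarrow> 'a. (\<forall>p\<in>P. \<forall>e>0. \<exists>N. \<forall>m\<ge>N. \<forall>n\<ge>N. p (X m - X n) < e)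
            \<longrightarrow> (\<exists>L. \<forall>p\<in>P. (\<lambda>n. p (X n - L)) \<longlonglongrightarrow> 0))"

definition snball :: "('a::real_vector \<Rightarrow> real) set \<Rightarrow> 'a \<Rightarrow> real \<Rightarrow> 'a set" where
  "snball F x e = {y. \<forall>p\<in>F. p (y - x) < e}"

definition lc_open :: "('a::real_vector \<Rightarrow> real) set \<Rightarrow> 'a set \<Rightarrow> bool" where
  "lc_open P U \<longleftrightarrow> (\<forall>x\<in>U. \<exists>F e. finite F \<and> F \<subseteq> P \<and> e > 0 \<and> snball F x e \<subseteq> U)"

text \<open>Continuity and derivatives of curves I \<rightarrow> V (one-sided at endpoints of I).\<close>
definition lc_continuous_on ::
  "('a::real_vector \<Rightarrow> real) set \<Rightarrow> real set \<Rightarrow> (real \<Rightarrow> 'a) \<Rightarrow> bool" where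
  "lc_continuous_on P I f \<longleftrightarrow>
     (\<forall>t\<in>I. \<forall>p\<in>P. ((\<lambda>s. p (f s - f t)) \<longlongrightarrow> 0) (at t within I))"

definition lc_has_derivative_on ::
  "('a::real_vector \<Rightarrow> real) set \<Rightarrow> real set \<Rightarrow> (real \<Rightarrow> 'a) \<Rightarrow> (real \<Rightarrow> 'a) \<Rightarrow> bool" where
  "lc_has_derivative_on P I f f' \<longleftrightarrow>
     (\<forall>t\<in>I. \<forall>p\<in>P.
        ((\<lambda>s. p ((1 / (s - t)) *\<^sub>R (f s - f t) - f' t)) \<longlongrightarrow> 0) (at t within I))"

definition lc_C1_on ::
  "('a::real_vector \<Rightarrow> real) set \<Rightarrow> real set \<Rightarrow> (real \<Rightarrow> 'a) \<Rightarrow> (real \<Rightarrow> 'a) \<Rightarrow> bool" where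
  "lc_C1_on P I f f' \<longleftrightarrow> lc_has_derivative_on P I f f' \<and> lc_continuous_on P I f'"

definition lc_unif_conv ::
  "('a::real_vector \<Rightarrow> real) set \<Rightarrow> real set \<Rightarrow> (nat \<Rightarrow> real \<Rightarrow> 'a) \<Rightarrow> (real \<Rightarrow> 'a) \<Rightarrow> bool" where
  "lc_unif_conv P I F f \<longleftrightarrow>
     (\<forall>p\<in>P. \<forall>e>0. \<forall>\<^sub>F n in sequentially. \<forall>t\<in>I. p (F n t - f t) < e)"

definition connection_form ::
  "('v::real_vector \<Rightarrow> real) set \<Rightarrow> ('w::real_vector \<Rightarrow> real) set \<Rightarrow> 'v set
   \<Rightarrow> ('v \<Rightarrow> 'v \<Rightarrow> 'w \<Rightarrow> 'w) \<Rightarrow> bool" where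
  "connection_form PV PW \<Omega> A \<longleftrightarrow>
     (\<forall>v\<in>\<Omega>. \<forall>w. linear (\<lambda>\<xi>. A v \<xi> w)) \<and>
     (\<forall>v\<in>\<Omega>. \<forall>\<xi>. linear (A v \<xi>)) \<and>
     (\<forall>v0\<in>\<Omega>. \<forall>\<xi>0 w0. \<forall>q\<in>PW. \<forall>e>0. \<exists>F G d. finite F \<and> F \<subseteq> PV \<and> finite G \<and> G \<subseteq> PW \<and> d > 0 \<and>
        (\<forall>v\<in>\<Omega> \<inter> snball F v0 d. \<forall>\<xi>\<in>snball F \<xi>0 d. \<forall>w\<in>snball G w0 d.
            q (A v \<xi> w - A v0 \<xi>0 w0) < e))"

definition parallel_lift ::
  "('v::real_vector \<Rightarrow> real) set \<Rightarrow> ('w::real_vector \<Rightarrow> real) set \<Rightarrow> ('v \<Rightarrow> 'v \<Rightarrow> 'w \<Rightarrow> 'w)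
   \<Rightarrow> real set \<Rightarrow> (real \<Rightarrow> 'v) \<Rightarrow> (real \<Rightarrow> 'v) \<Rightarrow> (real \<Rightarrow> 'w) \<Rightarrow> (real \<Rightarrow> 'w) \<Rightarrow> bool" where
  "parallel_lift PV PW A I x x' \<xi> \<xi>' \<longleftrightarrow>
     lc_C1_on PW I \<xi> \<xi>' \<and> (\<forall>t\<in>I. \<xi>' t + A (x t) (x' t) (\<xi> t) = 0)"

end

theory Submission
  imports Defs
begin

text \<open>Put \<open>\<xi>' t = - A (x t) (x' t) (\<xi> t)\<close>. Joint continuity of \<open>A\<close> turns the uniform
  convergence of \<open>x\<^sub>n\<close>, \<open>x\<^sub>n'\<close> and \<open>\<xi>\<^sub>n\<close> into continuous convergence of
  \<open>\<xi>\<^sub>n' = - A (x\<^sub>n, x\<^sub>n', \<xi>\<^sub>n)\<close> to \<open>\<xi>'\<close>: \<open>\<xi>\<^sub>n' u \<rightarrow> \<xi>' t\<close> as \<open>n \<rightarrow> \<infinity>\<close> and \<open>u \<rightarrow> t\<close>.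
  In particular \<open>\<xi>'\<close> is continuous. For each seminorm \<open>q\<close>, the mean value inequality on the
  segment between \<open>s\<close> and \<open>t\<close> then gives
  \<open>q (\<xi>\<^sub>n s - \<xi>\<^sub>n t - (s - t) \<xi>' t) \<le> \<epsilon> \<bar>s - t\<bar>\<close> for all large \<open>n\<close> and \<open>s\<close> near \<open>t\<close>,
  and this estimate passes to the limit \<open>\<xi>\<close>. Hence \<open>\<xi>'\<close> is the derivative of \<open>\<xi>\<close>.\<close>

section \<open>Seminorms and curves\<close>

lemma seminorm_nonneg: "seminorm p \<Longrightarrow> 0 \<le> p x"
  unfolding seminorm_def by blast

lemma seminorm_zero: "seminorm p \<Longrightarrow> p 0 = 0"
  using seminorm_def[of p] by (metis abs_0 mult_zero_left scaleR_zero_left)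

lemma seminorm_minus: "seminorm p \<Longrightarrow> p (- x) = p x"
  unfolding seminorm_def by (metis abs_minus_cancel abs_one mult_1 scaleR_minus1_left)

lemma seminorm_add: "seminorm p \<Longrightarrow> p (x + y) \<le> p x + p y"
  unfolding seminorm_def by blast

lemma seminorm_scaleR: "seminorm p \<Longrightarrow> p (c *\<^sub>R x) = \<bar>c\<bar> * p x"
  unfolding seminorm_def by blast

lemma seminorm_diff_commute: "seminorm p \<Longrightarrow> p (x - y) = p (y - x)"
  using seminorm_minus[of p "y - x"] by simp

lemma seminorm_diff_triangle: "seminorm p \<Longrightarrow> p (x - z) \<le> p (x - y) + p (y - z)"
  unfolding seminorm_def by (metis diff_add_cancel diff_diff_eq2 add_diff_cancel_left')

lemma seminorm_le_diff_add: "seminorm p \<Longrightarrow> p x \<le> p (x - y) + p y"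
  using seminorm_diff_triangle[of p x 0 y] seminorm_zero[of p] by simp

lemma seminorm_diff_le_add: "seminorm p \<Longrightarrow> p (x - y) \<le> p x + p y"
  using seminorm_add[of p x "- y"] seminorm_minus[of p y] by simp

lemma seminorm_reverse_triangle: "seminorm p \<Longrightarrow> \<bar>p x - p y\<bar> \<le> p (x - y)"
  using seminorm_diff_triangle[of p x 0 y] seminorm_diff_triangle[of p y 0 x]
    seminorm_diff_commute[of p x y] by simp

lemma seminorm_tendsto:
  assumes p: "seminorm p" and lim: "((\<lambda>s. p (X s - x)) \<longlongrightarrow> 0) F"
  shows "((\<lambda>s. p (X s)) \<longlongrightarrow> p x) F"
proof -
  have "((\<lambda>s. p (X s) - p x) \<longlongrightarrow> 0) F"
    by (rule Lim_null_comparison[OF _ lim]) (simp add: seminorm_reverse_triangle[OF p])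
  then show ?thesis by (rule LIM_zero_cancel)
qed

lemma tendsto_nonneg_zero_iff:
  fixes g :: "'a \<Rightarrow> real"
  assumes "\<And>s. 0 \<le> g s"
  shows "(g \<longlongrightarrow> 0) F \<longleftrightarrow> (\<forall>e>0. \<forall>\<^sub>F s in F. g s < e)"
  using assms unfolding tendsto_iff by (simp add: dist_real_def)

lemma lcs_seminorm: "lcs P \<Longrightarrow> p \<in> P \<Longrightarrow> seminorm p"
  unfolding lcs_def by auto

lemma lc_has_derivative_on_subset:
  "lc_has_derivative_on P I f f' \<Longrightarrow> Q \<subseteq> P \<Longrightarrow> J \<subseteq> I \<Longrightarrow> lc_has_derivative_on Q J f f'"
  unfolding lc_has_derivative_on_def by (meson subsetD tendsto_within_subset)

lemma lc_continuous_on_if_has_derivative: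
  assumes seminorms: "\<forall>p\<in>P. seminorm p" and deriv: "lc_has_derivative_on P I f f'"
  shows "lc_continuous_on P I f"
  unfolding lc_continuous_on_def
proof (intro ballI)
  fix t p assume t: "t \<in> I" and "p \<in> P"
  then have p: "seminorm p"
    and quot: "((\<lambda>s. p ((1 / (s - t)) *\<^sub>R (f s - f t) - f' t)) \<longlongrightarrow> 0) (at t within I)"
    using seminorms deriv unfolding lc_has_derivative_on_def by auto
  let ?D = "\<lambda>s. p ((1 / (s - t)) *\<^sub>R (f s - f t) - f' t)"
  show "((\<lambda>s. p (f s - f t)) \<longlongrightarrow> 0) (at t within I)"
  proof (rule Lim_null_comparison)
    show "\<forall>\<^sub>F s in at t within I. norm (p (f s - f t)) \<le> \<bar>s - t\<bar> * (?D s + p (f' t))"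
      using eventually_neq_at_within[of t t I]
    proof eventually_elim
      case (elim s)
      then have "f s - f t = (s - t) *\<^sub>R ((1 / (s - t)) *\<^sub>R (f s - f t))" by simp
      then have "p (f s - f t) = \<bar>s - t\<bar> * p ((1 / (s - t)) *\<^sub>R (f s - f t))"
        using p unfolding seminorm_def by metis
      also have "\<dots> \<le> \<bar>s - t\<bar> * (?D s + p (f' t))"
        by (intro mult_left_mono seminorm_le_diff_add[OF p]) simp
      finally show ?case using p by (simp add: seminorm_def)
    qed
    have "((\<lambda>s. \<bar>s - t\<bar> * (?D s + p (f' t))) \<longlongrightarrow> \<bar>t - t\<bar> * (0 + p (f' t))) (at t within I)"
      by (intro tendsto_intros quot)
    then show "((\<lambda>s. \<bar>s - t\<bar> * (?D s + p (f' t))) \<longlongrightarrow> 0) (at t within I)" by simp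
  qed
qed

lemma lc_continuous_on_ball:
  assumes p: "seminorm p" and cont: "lc_continuous_on P I f" and "p \<in> P" "t \<in> I" "e > 0"
  obtains \<delta> where "\<delta> > 0" "\<And>u. u \<in> I \<Longrightarrow> \<bar>u - t\<bar> < \<delta> \<Longrightarrow> p (f u - f t) < e"
proof -
  have "((\<lambda>s. p (f s - f t)) \<longlongrightarrow> 0) (at t within I)"
    using assms cont unfolding lc_continuous_on_def by blast
  then have "\<forall>\<^sub>F s in at t within I. p (f s - f t) < e"
    using \<open>e > 0\<close> unfolding tendsto_nonneg_zero_iff[OF seminorm_nonneg[OF p]] by blast
  then obtain \<delta> where "\<delta> > 0" "\<And>u. u \<in> I \<Longrightarrow> u \<noteq> t \<Longrightarrow> \<bar>u - t\<bar> < \<delta> \<Longrightarrow> p (f u - f t) < e"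
    unfolding eventually_at dist_real_def by blast
  with that show ?thesis using \<open>e > 0\<close> seminorm_zero[OF p] by (metis diff_self)
qed

section \<open>Mean value inequality\<close>

lemma continuous_on_Icc_diff_le_by_right_steps:
  fixes \<phi> :: "real \<Rightarrow> real"
  assumes "a \<le> b" and cont: "continuous_on {a..b} \<phi>"
    and step: "\<And>u. a \<le> u \<Longrightarrow> u < b \<Longrightarrow> \<exists>s\<in>{u<..b}. \<phi> s - \<phi> u \<le> K * (s - u)"
  shows "\<phi> b - \<phi> a \<le> K * (b - a)"
proof -
  define T where "T = {a..b} \<inter> (\<lambda>u. \<phi> u - \<phi> a - K * (u - a)) -` {..0}"
  have "closed T"
    unfolding T_def by (intro continuous_closed_preimage continuous_intros cont)
  have "a \<in> T" and "T \<subseteq> {a..b}"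
    using \<open>a \<le> b\<close> by (auto simp: T_def)
  then have "bdd_above T" by (meson bdd_above_Icc bdd_above_mono)
  define c where "c = Sup T"
  have "c \<in> T"
    unfolding c_def using closed_contains_Sup \<open>bdd_above T\<close> \<open>closed T\<close> \<open>a \<in> T\<close> by blast
  have "c = b"
  proof (rule ccontr)
    assume "c \<noteq> b"
    with \<open>c \<in> T\<close> \<open>T \<subseteq> {a..b}\<close> have "a \<le> c" "c < b" by auto
    then obtain s where s: "s \<in> {c<..b}" "\<phi> s - \<phi> c \<le> K * (s - c)" using step by blast
    with \<open>c \<in> T\<close> \<open>a \<le> c\<close> have "s \<in> T" by (auto simp: T_def algebra_simps)
    then have "s \<le> c" unfolding c_def using \<open>bdd_above T\<close> by (rule cSup_upper)
    with s show False by auto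
  qed
  with \<open>c \<in> T\<close> show ?thesis by (simp add: T_def)
qed

lemma lc_has_derivative_on_diff_linear:
  assumes deriv: "lc_has_derivative_on P I f f'"
  shows "lc_has_derivative_on P I (\<lambda>u. f u - u *\<^sub>R c) (\<lambda>u. f' u - c)"
  unfolding lc_has_derivative_on_def
proof (intro ballI)
  fix t p assume "t \<in> I" "p \<in> P"
  have "\<forall>\<^sub>F s in at t within I. p ((1 / (s - t)) *\<^sub>R (f s - f t) - f' t)
      = p ((1 / (s - t)) *\<^sub>R (f s - s *\<^sub>R c - (f t - t *\<^sub>R c)) - (f' t - c))"
    using eventually_neq_at_within[of t t I]
  proof eventually_elim
    case (elim s)
    have linear: "f s - s *\<^sub>R c - (f t - t *\<^sub>R c) = (f s - f t) - (s - t) *\<^sub>R c"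
      by (simp add: algebra_simps)
    have "(1 / (s - t)) *\<^sub>R ((s - t) *\<^sub>R c) = c" using elim by simp
    then have "(1 / (s - t)) *\<^sub>R (f s - s *\<^sub>R c - (f t - t *\<^sub>R c)) - (f' t - c)
        = (1 / (s - t)) *\<^sub>R (f s - f t) - f' t"
      unfolding linear scaleR_right_diff_distrib[of _ "f s - f t"] by (simp add: algebra_simps)
    then show ?case by metis
  qed
  moreover have "((\<lambda>s. p ((1 / (s - t)) *\<^sub>R (f s - f t) - f' t)) \<longlongrightarrow> 0) (at t within I)"
    using deriv \<open>t \<in> I\<close> \<open>p \<in> P\<close> unfolding lc_has_derivative_on_def by blast
  ultimately show "((\<lambda>s. p ((1 / (s - t)) *\<^sub>R (f s - s *\<^sub>R c - (f t - t *\<^sub>R c)) - (f' t - c))) \<longlongrightarrow> 0)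
      (at t within I)"
    by (rule Lim_transform_eventually[rotated])
qed

lemma seminorm_derivative_right_step:
  fixes f f' :: "real \<Rightarrow> 'a::real_vector"
  assumes p: "seminorm p" and deriv: "lc_has_derivative_on {p} {a..b} f f'"
    and u: "a \<le> u" "u < b" and "e > 0"
  shows "\<exists>s\<in>{u<..b}. p (f s - f u) \<le> (p (f' u) + e) * (s - u)"
proof -
  let ?D = "\<lambda>s. (1 / (s - u)) *\<^sub>R (f s - f u) - f' u"
  have "((\<lambda>s. p (?D s)) \<longlongrightarrow> 0) (at u within {a..b})"
    using deriv u unfolding lc_has_derivative_on_def by auto
  then have "\<forall>\<^sub>F s in at u within {a..b}. p (?D s) < e"
    using \<open>e > 0\<close> unfolding tendsto_nonneg_zero_iff[OF seminorm_nonneg[OF p]] by blast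
  then obtain \<delta> where "\<delta> > 0" and \<delta>: "\<And>s. s \<in> {a..b} \<Longrightarrow> s \<noteq> u \<Longrightarrow> \<bar>s - u\<bar> < \<delta> \<Longrightarrow> p (?D s) < e"
    unfolding eventually_at dist_real_def by blast
  define s where "s = min b (u + \<delta> / 2)"
  have s: "s \<in> {u<..b}" "s \<in> {a..b}" "\<bar>s - u\<bar> < \<delta>"
    using u \<open>\<delta> > 0\<close> by (auto simp: s_def)
  have "f s - f u = (s - u) *\<^sub>R ?D s + (s - u) *\<^sub>R f' u"
    using s(1) by (simp add: algebra_simps)
  then have "p (f s - f u) \<le> (s - u) * p (?D s) + (s - u) * p (f' u)"
    using seminorm_add[OF p, of "(s - u) *\<^sub>R ?D s" "(s - u) *\<^sub>R f' u"] s(1)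
    by (simp add: seminorm_scaleR[OF p])
  also have "\<dots> \<le> (s - u) * e + (s - u) * p (f' u)"
    using \<delta>[OF s(2)] s by (intro add_right_mono mult_left_mono) auto
  also have "\<dots> = (p (f' u) + e) * (s - u)"
    by (simp add: algebra_simps)
  finally show ?thesis using s(1) by blast
qed

lemma seminorm_mean_value_bound_zero:
  fixes f f' :: "real \<Rightarrow> 'a::real_vector"
  assumes p: "seminorm p" and "a \<le> b" and deriv: "lc_has_derivative_on {p} {a..b} f f'"
    and bound: "\<And>u. u \<in> {a..b} \<Longrightarrow> p (f' u) \<le> M"
  shows "p (f b - f a) \<le> M * (b - a)"
proof -
  have cont: "continuous_on {a..b} (\<lambda>u. p (f u - f a))"
    unfolding continuous_on_def
  proof
    fix u assume "u \<in> {a..b}"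
    then have "((\<lambda>s. p (f s - f u)) \<longlongrightarrow> 0) (at u within {a..b})"
      using lc_continuous_on_if_has_derivative[of "{p}", OF _ deriv] p
      unfolding lc_continuous_on_def by auto
    then show "((\<lambda>s. p (f s - f a)) \<longlongrightarrow> p (f u - f a)) (at u within {a..b})"
      by (intro seminorm_tendsto[OF p]) simp
  qed
  have "p (f b - f a) \<le> M * (b - a) + e" if "e > 0" for e
  proof -
    have e': "e / (b - a + 1) > 0" using that \<open>a \<le> b\<close> by simp
    have "\<exists>s\<in>{u<..b}. p (f s - f a) - p (f u - f a) \<le> (M + e / (b - a + 1)) * (s - u)"
      if u: "a \<le> u" "u < b" for u
    proof -
      obtain s where s: "s \<in> {u<..b}" "p (f s - f u) \<le> (p (f' u) + e / (b - a + 1)) * (s - u)"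
        using seminorm_derivative_right_step[OF p deriv u e'] by blast
      moreover have "p (f s - f a) \<le> p (f s - f u) + p (f u - f a)"
        by (rule seminorm_diff_triangle[OF p])
      moreover have "(p (f' u) + e / (b - a + 1)) * (s - u) \<le> (M + e / (b - a + 1)) * (s - u)"
        using bound u s(1) by (intro mult_right_mono) auto
      ultimately have "p (f s - f a) - p (f u - f a) \<le> (M + e / (b - a + 1)) * (s - u)"
        by linarith
      with s(1) show ?thesis by blast
    qed
    from continuous_on_Icc_diff_le_by_right_steps[OF \<open>a \<le> b\<close> cont this]
    have "p (f b - f a) \<le> (M + e / (b - a + 1)) * (b - a)" by (simp add: seminorm_zero[OF p])
    also have "\<dots> \<le> M * (b - a) + e"
      using that \<open>a \<le> b\<close> by (simp add: field_simps)
    finally show ?thesis .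
  qed
  then show ?thesis by (rule field_le_epsilon)
qed

lemma seminorm_mean_value_bound:
  fixes f f' :: "real \<Rightarrow> 'a::real_vector"
  assumes p: "seminorm p" and "a \<le> b" and deriv: "lc_has_derivative_on {p} {a..b} f f'"
    and bound: "\<And>u. u \<in> {a..b} \<Longrightarrow> p (f' u - c) \<le> M"
  shows "p (f b - f a - (b - a) *\<^sub>R c) \<le> M * (b - a)"
proof -
  have "p ((f b - b *\<^sub>R c) - (f a - a *\<^sub>R c)) \<le> M * (b - a)"
    using seminorm_mean_value_bound_zero[OF p \<open>a \<le> b\<close> lc_has_derivative_on_diff_linear[OF deriv]] bound
    by blast
  moreover have "(f b - b *\<^sub>R c) - (f a - a *\<^sub>R c) = f b - f a - (b - a) *\<^sub>R c"
    by (simp add: algebra_simps)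
  ultimately show ?thesis by simp
qed

lemma seminorm_mean_value_bound_segment:
  fixes f f' :: "real \<Rightarrow> 'a::real_vector"
  assumes p: "seminorm p" and deriv: "lc_has_derivative_on {p} (closed_segment s t) f f'"
    and bound: "\<And>u. u \<in> closed_segment s t \<Longrightarrow> p (f' u - c) \<le> M"
  shows "p (f s - f t - (s - t) *\<^sub>R c) \<le> M * \<bar>s - t\<bar>"
proof (cases "t \<le> s")
  case True
  then have "closed_segment s t = {t..s}"
    by (simp add: closed_segment_eq_real_ivl)
  then show ?thesis using seminorm_mean_value_bound[OF p True] deriv bound True by simp
next
  case False
  then have "s \<le> t" and "closed_segment s t = {s..t}"
    by (simp_all add: closed_segment_eq_real_ivl)
  then have "p (f t - f s - (t - s) *\<^sub>R c) \<le> M * (t - s)"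
    using seminorm_mean_value_bound[OF p] deriv bound by simp
  moreover have "f s - f t - (s - t) *\<^sub>R c = - (f t - f s - (t - s) *\<^sub>R c)"
    by (simp add: algebra_simps)
  ultimately show ?thesis using \<open>s \<le> t\<close> by (metis seminorm_minus[OF p] abs_minus_commute abs_of_nonneg diff_ge_0_iff_ge)
qed

section \<open>Continuous convergence\<close>

lemma eventually_nhds_within_prod_sequentially:
  fixes t :: real
  shows "(\<forall>\<^sub>F (u, n) in inf (nhds t) (principal I) \<times>\<^sub>F sequentially. P u n) \<longleftrightarrow>
    (\<exists>\<delta>>0. \<exists>N. \<forall>u\<in>I. \<bar>u - t\<bar> < \<delta> \<longrightarrow> (\<forall>n\<ge>N. P u n))"
  unfolding eventually_prod_filter eventually_inf_principal eventually_nhds_metric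
    eventually_sequentially dist_real_def
proof safe
  fix Pf Pg \<delta> N
  assume "\<forall>u v. Pf u \<longrightarrow> Pg v \<longrightarrow> P u v" "\<delta> > 0" "\<forall>u. \<bar>u - t\<bar> < \<delta> \<longrightarrow> u \<in> I \<longrightarrow> Pf u"
    "\<forall>n\<ge>N. Pg n"
  then show "\<exists>\<delta>>0. \<exists>N. \<forall>u\<in>I. \<bar>u - t\<bar> < \<delta> \<longrightarrow> (\<forall>n\<ge>N. P u n)" by blast
next
  fix \<delta> N assume "\<delta> > 0" "\<forall>u\<in>I. \<bar>u - t\<bar> < \<delta> \<longrightarrow> (\<forall>n\<ge>N. P u n)"
  then show "\<exists>Pf Pg. (\<exists>\<delta>>0. \<forall>u. \<bar>u - t\<bar> < \<delta> \<longrightarrow> u \<in> I \<longrightarrow> Pf u) \<and> (\<exists>N. \<forall>n\<ge>N. Pg n)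
      \<and> (\<forall>u n. Pf u \<longrightarrow> Pg n \<longrightarrow> P u n)"
    by (intro exI[of _ "\<lambda>u. u \<in> I \<and> \<bar>u - t\<bar> < \<delta>"] exI[of _ "\<lambda>n. n \<ge> N"]) auto
qed

text \<open>Continuous convergence: \<open>F n u \<rightarrow> f t\<close> as \<open>n \<rightarrow> \<infinity>\<close> and \<open>u \<rightarrow> t\<close> within \<open>I\<close> jointly
  (including \<open>u = t\<close>). For continuous \<open>f\<close> this is local uniform convergence.\<close>

definition lc_continuous_conv ::
  "('a::real_vector \<Rightarrow> real) set \<Rightarrow> real set \<Rightarrow> (nat \<Rightarrow> real \<Rightarrow> 'a) \<Rightarrow> (real \<Rightarrow> 'a) \<Rightarrow> bool" where
  "lc_continuous_conv P I F f \<longleftrightarrow> (\<forall>t\<in>I. \<forall>p\<in>P. \<forall>e>0.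
     \<forall>\<^sub>F (u, n) in inf (nhds t) (principal I) \<times>\<^sub>F sequentially. p (F n u - f t) < e)"

lemma lc_continuous_conv_ball:
  assumes "lc_continuous_conv P I F f" "t \<in> I" "p \<in> P" "e > 0"
  obtains \<delta> N where "\<delta> > 0" "\<And>u n. u \<in> I \<Longrightarrow> \<bar>u - t\<bar> < \<delta> \<Longrightarrow> n \<ge> N \<Longrightarrow> p (F n u - f t) < e"
  using assms unfolding lc_continuous_conv_def eventually_nhds_within_prod_sequentially by meson

lemma lc_continuous_conv_pointwise:
  assumes "lc_continuous_conv P I F f" "t \<in> I" "p \<in> P" "e > 0"
  shows "\<forall>\<^sub>F n in sequentially. p (F n t - f t) < e"
proof -
  obtain \<delta> N where "\<delta> > 0" "\<And>u n. u \<in> I \<Longrightarrow> \<bar>u - t\<bar> < \<delta> \<Longrightarrow> n \<ge> N \<Longrightarrow> p (F n u - f t) < e"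
    using lc_continuous_conv_ball[OF assms] by blast
  then show ?thesis unfolding eventually_sequentially using \<open>t \<in> I\<close> by (auto intro!: exI[of _ N])
qed

lemma lc_continuous_conv_if_unif_conv:
  assumes seminorms: "\<forall>p\<in>P. seminorm p" and cont: "\<And>n. lc_continuous_on P I (F n)"
    and unif: "lc_unif_conv P I F f"
  shows "lc_continuous_conv P I F f"
  unfolding lc_continuous_conv_def eventually_nhds_within_prod_sequentially
proof (intro ballI allI impI)
  fix t p and e :: real assume t: "t \<in> I" and "p \<in> P" and "e > 0"
  then have p: "seminorm p" and e4: "e / 4 > 0" using seminorms by auto
  obtain N where N: "\<And>n u. n \<ge> N \<Longrightarrow> u \<in> I \<Longrightarrow> p (F n u - f u) < e / 4"
    using unif \<open>p \<in> P\<close> e4 unfolding lc_unif_conv_def eventually_sequentially by meson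
  obtain \<delta> where "\<delta> > 0" and \<delta>: "\<And>u. u \<in> I \<Longrightarrow> \<bar>u - t\<bar> < \<delta> \<Longrightarrow> p (F N u - F N t) < e / 4"
    using lc_continuous_on_ball[OF p cont \<open>p \<in> P\<close> t e4] by blast
  show "\<exists>\<delta>>0. \<exists>N. \<forall>u\<in>I. \<bar>u - t\<bar> < \<delta> \<longrightarrow> (\<forall>n\<ge>N. p (F n u - f t) < e)"
  proof (intro exI conjI ballI impI allI)
    fix u n assume u: "u \<in> I" "\<bar>u - t\<bar> < \<delta>" and n: "N \<le> n"
    have "p (F n u - f t) \<le> p (F n u - f u) + p (f u - F N u) + p (F N u - F N t) + p (F N t - f t)"
      using seminorm_diff_triangle[OF p, of "F n u" "f t" "f u"]
        seminorm_diff_triangle[OF p, of "f u" "f t" "F N u"]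
        seminorm_diff_triangle[OF p, of "F N u" "f t" "F N t"] by linarith
    moreover have "p (f u - F N u) < e / 4"
      using N[of N u] u seminorm_diff_commute[OF p] by auto
    ultimately show "p (F n u - f t) < e" using N[OF n u(1)] N[of N t] \<delta>[OF u] t by auto
  qed (rule \<open>\<delta> > 0\<close>)
qed

lemma lc_continuous_on_if_continuous_conv:
  assumes seminorms: "\<forall>p\<in>P. seminorm p" and conv: "lc_continuous_conv P I F f"
  shows "lc_continuous_on P I f"
  unfolding lc_continuous_on_def
proof (intro ballI)
  fix t p assume t: "t \<in> I" and "p \<in> P"
  then have p: "seminorm p" using seminorms by auto
  show "((\<lambda>s. p (f s - f t)) \<longlongrightarrow> 0) (at t within I)"
    unfolding tendsto_nonneg_zero_iff[OF seminorm_nonneg[OF p]]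
  proof (intro allI impI)
    fix e :: real assume "e > 0"
    then have e2: "e / 2 > 0" by simp
    obtain \<delta> N where "\<delta> > 0" and \<delta>: "\<And>u n. u \<in> I \<Longrightarrow> \<bar>u - t\<bar> < \<delta> \<Longrightarrow> n \<ge> N \<Longrightarrow> p (F n u - f t) < e / 2"
      using lc_continuous_conv_ball[OF conv t \<open>p \<in> P\<close> e2] by blast
    show "\<forall>\<^sub>F s in at t within I. p (f s - f t) < e"
      unfolding eventually_at dist_real_def
    proof (intro exI conjI ballI impI)
      fix s assume s: "s \<in> I" "s \<noteq> t \<and> \<bar>s - t\<bar> < \<delta>"
      obtain n where n: "n \<ge> N" "p (F n s - f s) < e / 2"
        using eventually_happens'[OF _ eventually_conj[OF eventually_ge_at_top[of N]
              lc_continuous_conv_pointwise[OF conv s(1) \<open>p \<in> P\<close> e2]]] by auto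
      have "p (f s - f t) \<le> p (f s - F n s) + p (F n s - f t)"
        by (rule seminorm_diff_triangle[OF p])
      then show "p (f s - f t) < e"
        using n \<delta>[of s n] s seminorm_diff_commute[OF p, of "f s" "F n s"] by auto
    qed (rule \<open>\<delta> > 0\<close>)
  qed
qed

lemma eventually_nhds_within_prod_mem:
  "\<forall>\<^sub>F (u, n) in inf (nhds t) (principal I) \<times>\<^sub>F sequentially. u \<in> I"
  by (simp add: eventually_prod1 eventually_inf_principal)

lemma lc_continuous_conv_uminus:
  assumes seminorms: "\<forall>p\<in>P. seminorm p" and conv: "lc_continuous_conv P I F f"
    and G: "\<And>n u. u \<in> I \<Longrightarrow> G n u = - F n u"
  shows "lc_continuous_conv P I G (\<lambda>u. - f u)"
  unfolding lc_continuous_conv_def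
proof (intro ballI allI impI)
  fix t p and e :: real assume "t \<in> I" "p \<in> P" "e > 0"
  then have "\<forall>\<^sub>F (u, n) in inf (nhds t) (principal I) \<times>\<^sub>F sequentially. p (F n u - f t) < e"
    using conv unfolding lc_continuous_conv_def by blast
  with eventually_nhds_within_prod_mem
  show "\<forall>\<^sub>F (u, n) in inf (nhds t) (principal I) \<times>\<^sub>F sequentially. p (G n u - - f t) < e"
  proof eventually_elim
    case (elim un)
    then show ?case
      using G seminorm_minus[of p "F (snd un) (fst un) - f t"] seminorms \<open>p \<in> P\<close>
      by (auto simp: algebra_simps)
  qed
qed

lemma lc_continuous_conv_snball:
  assumes conv: "lc_continuous_conv P I F f" and "finite Q" "Q \<subseteq> P" "t \<in> I" "e > 0"
  shows "\<forall>\<^sub>F (u, n) in inf (nhds t) (principal I) \<times>\<^sub>F sequentially. F n u \<in> snball Q (f t) e"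
proof -
  have "\<forall>\<^sub>F un in inf (nhds t) (principal I) \<times>\<^sub>F sequentially. \<forall>p\<in>Q. (\<lambda>(u, n). p (F n u - f t) < e) un"
    using assms unfolding lc_continuous_conv_def by (intro eventually_ball_finite) auto
  then show ?thesis by (simp add: snball_def case_prod_unfold)
qed

lemma lc_continuous_conv_connection_form:
  assumes A: "connection_form PV PW \<Omega> A"
    and in_\<Omega>: "\<And>n u. u \<in> I \<Longrightarrow> X n u \<in> \<Omega>" "\<And>u. u \<in> I \<Longrightarrow> x u \<in> \<Omega>"
    and conv: "lc_continuous_conv PV I X x" "lc_continuous_conv PV I X' x'" "lc_continuous_conv PW I \<Xi> \<xi>"
  shows "lc_continuous_conv PW I (\<lambda>n u. A (X n u) (X' n u) (\<Xi> n u)) (\<lambda>u. A (x u) (x' u) (\<xi> u))"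
  unfolding lc_continuous_conv_def
proof (intro ballI allI impI)
  fix t q and e :: real assume t: "t \<in> I" and "q \<in> PW" "e > 0"
  then have "\<exists>F G d. finite F \<and> F \<subseteq> PV \<and> finite G \<and> G \<subseteq> PW \<and> d > 0 \<and>
    (\<forall>v\<in>\<Omega> \<inter> snball F (x t) d. \<forall>v'\<in>snball F (x' t) d. \<forall>w\<in>snball G (\<xi> t) d.
      q (A v v' w - A (x t) (x' t) (\<xi> t)) < e)"
    using A in_\<Omega>(2)[OF t] unfolding connection_form_def by blast
  then obtain F G d where F: "finite F" "F \<subseteq> PV" and G: "finite G" "G \<subseteq> PW" and "d > 0"
    and near: "\<forall>v\<in>\<Omega> \<inter> snball F (x t) d. \<forall>v'\<in>snball F (x' t) d. \<forall>w\<in>snball G (\<xi> t) d.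
      q (A v v' w - A (x t) (x' t) (\<xi> t)) < e"
    by blast
  let ?N = "inf (nhds t) (principal I) \<times>\<^sub>F sequentially"
  have "\<forall>\<^sub>F (u, n) in ?N. u \<in> I" by (rule eventually_nhds_within_prod_mem)
  moreover have "\<forall>\<^sub>F (u, n) in ?N. X n u \<in> snball F (x t) d"
    by (rule lc_continuous_conv_snball[OF conv(1) F t \<open>d > 0\<close>])
  moreover have "\<forall>\<^sub>F (u, n) in ?N. X' n u \<in> snball F (x' t) d"
    by (rule lc_continuous_conv_snball[OF conv(2) F t \<open>d > 0\<close>])
  moreover have "\<forall>\<^sub>F (u, n) in ?N. \<Xi> n u \<in> snball G (\<xi> t) d"
    by (rule lc_continuous_conv_snball[OF conv(3) G t \<open>d > 0\<close>])
  ultimately show "\<forall>\<^sub>F (u, n) in ?N. q (A (X n u) (X' n u) (\<Xi> n u) - A (x t) (x' t) (\<xi> t)) < e"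
    by eventually_elim (use near in_\<Omega>(1) in auto)
qed

section \<open>Limits of differentiable curves\<close>

lemma seminorm_increment_bound_limit:
  assumes q: "seminorm q"
    and lim: "(\<lambda>n. q (F n s - f s)) \<longlonglongrightarrow> 0" "(\<lambda>n. q (F n t - f t)) \<longlonglongrightarrow> 0"
    and bound: "\<forall>\<^sub>F n in sequentially. q (F n s - F n t - c) \<le> B"
  shows "q (f s - f t - c) \<le> B"
proof -
  have diff: "norm (q (F n s - F n t - c - (f s - f t - c))) \<le> q (F n s - f s) + q (F n t - f t)" for n
  proof -
    have "F n s - F n t - c - (f s - f t - c) = (F n s - f s) - (F n t - f t)"
      by (simp add: algebra_simps)
    then show ?thesis
      unfolding real_norm_def abs_of_nonneg[OF seminorm_nonneg[OF q]] by (metis seminorm_diff_le_add[OF q])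
  qed
  have "(\<lambda>n. q (F n s - f s) + q (F n t - f t)) \<longlonglongrightarrow> 0"
    using tendsto_add[OF lim] by simp
  with always_eventually[OF allI[OF diff]]
  have "(\<lambda>n. q (F n s - F n t - c - (f s - f t - c))) \<longlonglongrightarrow> 0"
    by (rule Lim_null_comparison)
  then have "(\<lambda>n. q (F n s - F n t - c)) \<longlonglongrightarrow> q (f s - f t - c)"
    by (rule seminorm_tendsto[OF q])
  then show ?thesis using bound by (rule tendsto_upperbound) simp
qed

lemma lc_has_derivative_onI:
  assumes seminorms: "\<forall>p\<in>P. seminorm p"
    and increment: "\<And>t q e. t \<in> I \<Longrightarrow> q \<in> P \<Longrightarrow> e > 0 \<Longrightarrow>
      \<exists>\<delta>>0. \<forall>s\<in>I. \<bar>s - t\<bar> < \<delta> \<longrightarrow> q (f s - f t - (s - t) *\<^sub>R g t) \<le> e * \<bar>s - t\<bar>"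
  shows "lc_has_derivative_on P I f g"
  unfolding lc_has_derivative_on_def
proof (intro ballI)
  fix t q assume t: "t \<in> I" and "q \<in> P"
  then have q: "seminorm q" using seminorms by auto
  show "((\<lambda>s. q ((1 / (s - t)) *\<^sub>R (f s - f t) - g t)) \<longlongrightarrow> 0) (at t within I)"
    unfolding tendsto_nonneg_zero_iff[OF seminorm_nonneg[OF q]]
  proof (intro allI impI)
    fix e :: real assume "e > 0"
    then obtain \<delta> where "\<delta> > 0"
      and \<delta>: "\<And>s. s \<in> I \<Longrightarrow> \<bar>s - t\<bar> < \<delta> \<Longrightarrow> q (f s - f t - (s - t) *\<^sub>R g t) \<le> e / 2 * \<bar>s - t\<bar>"
      using increment[OF t \<open>q \<in> P\<close>, of "e / 2"] by auto
    show "\<forall>\<^sub>F s in at t within I. q ((1 / (s - t)) *\<^sub>R (f s - f t) - g t) < e"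
      unfolding eventually_at dist_real_def
    proof (intro exI conjI ballI impI)
      fix s assume s: "s \<in> I" "s \<noteq> t \<and> \<bar>s - t\<bar> < \<delta>"
      have "(1 / (s - t)) *\<^sub>R (f s - f t) - g t = (1 / (s - t)) *\<^sub>R (f s - f t - (s - t) *\<^sub>R g t)"
        using s(2) by (simp add: scaleR_right_diff_distrib)
      then have "q ((1 / (s - t)) *\<^sub>R (f s - f t) - g t) \<le> e / 2"
        using \<delta>[of s] s by (simp add: seminorm_scaleR[OF q] divide_le_eq)
      then show "q ((1 / (s - t)) *\<^sub>R (f s - f t) - g t) < e" using \<open>e > 0\<close> by linarith
    qed (rule \<open>\<delta> > 0\<close>)
  qed
qed

lemma lc_has_derivative_on_limit:
  assumes seminorms: "\<forall>p\<in>P. seminorm p" and I: "is_interval I"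
    and deriv: "\<And>n. lc_has_derivative_on P I (F n) (F' n)"
    and lim: "\<And>t p e. t \<in> I \<Longrightarrow> p \<in> P \<Longrightarrow> e > 0 \<Longrightarrow> \<forall>\<^sub>F n in sequentially. p (F n t - f t) < e"
    and conv: "lc_continuous_conv P I F' g"
  shows "lc_has_derivative_on P I f g"
proof (rule lc_has_derivative_onI[OF seminorms])
  fix t q and e :: real assume t: "t \<in> I" and "q \<in> P" and "e > 0"
  then have q: "seminorm q" using seminorms by auto
  have q_lim: "(\<lambda>n. q (F n u - f u)) \<longlonglongrightarrow> 0" if "u \<in> I" for u
    unfolding tendsto_nonneg_zero_iff[OF seminorm_nonneg[OF q]] using lim[OF that \<open>q \<in> P\<close>] by blast
  obtain \<delta> N where "\<delta> > 0"
    and \<delta>: "\<And>u n. u \<in> I \<Longrightarrow> \<bar>u - t\<bar> < \<delta> \<Longrightarrow> n \<ge> N \<Longrightarrow> q (F' n u - g t) < e"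
    using lc_continuous_conv_ball[OF conv t \<open>q \<in> P\<close> \<open>e > 0\<close>] by blast
  have "q (f s - f t - (s - t) *\<^sub>R g t) \<le> e * \<bar>s - t\<bar>" if s: "s \<in> I" "\<bar>s - t\<bar> < \<delta>" for s
  proof -
    have seg: "closed_segment s t \<subseteq> I"
      using closed_segment_subset[OF s(1) t is_interval_convex[OF I]] .
    have "q (F n s - F n t - (s - t) *\<^sub>R g t) \<le> e * \<bar>s - t\<bar>" if "n \<ge> N" for n
    proof (rule seminorm_mean_value_bound_segment[OF q])
      show "lc_has_derivative_on {q} (closed_segment s t) (F n) (F' n)"
        using lc_has_derivative_on_subset[OF deriv _ seg] \<open>q \<in> P\<close> by blast
      fix u assume "u \<in> closed_segment s t"
      then have "u \<in> I" "\<bar>u - t\<bar> < \<delta>"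
        using seg dist_in_closed_segment[of u s t] s by (auto simp: dist_real_def)
      then show "q (F' n u - g t) \<le> e" using \<delta> that by (simp add: less_imp_le)
    qed
    then have "\<forall>\<^sub>F n in sequentially. q (F n s - F n t - (s - t) *\<^sub>R g t) \<le> e * \<bar>s - t\<bar>"
      by (rule eventually_sequentiallyI)
    then show ?thesis by (rule seminorm_increment_bound_limit[OF q q_lim[OF s(1)] q_lim[OF t]])
  qed
  with \<open>\<delta> > 0\<close> show "\<exists>\<delta>>0. \<forall>s\<in>I. \<bar>s - t\<bar> < \<delta> \<longrightarrow> q (f s - f t - (s - t) *\<^sub>R g t) \<le> e * \<bar>s - t\<bar>"
    by blast
qed

theorem lemma6p1:
  fixes PV :: "('v::real_vector \<Rightarrow> real) set" and PW :: "('w::real_vector \<Rightarrow> real) set"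
    and \<Omega> :: "'v set" and A :: "'v \<Rightarrow> 'v \<Rightarrow> 'w \<Rightarrow> 'w" and I :: "real set"
    and xs xs' :: "nat \<Rightarrow> real \<Rightarrow> 'v" and x x' :: "real \<Rightarrow> 'v"
    and \<xi>s \<xi>s' :: "nat \<Rightarrow> real \<Rightarrow> 'w" and \<xi> :: "real \<Rightarrow> 'w"
  assumes "lcs PV" and "lcs PW" and "lc_open PV \<Omega>"
    and "connection_form PV PW \<Omega> A"
    and "is_interval I"
    and "\<And>n. lc_C1_on PV I (xs n) (xs' n)" and "\<And>n t. t \<in> I \<Longrightarrow> xs n t \<in> \<Omega>"
    and "\<And>t. t \<in> I \<Longrightarrow> x t \<in> \<Omega>"
    and "lc_has_derivative_on PV I x x'"
    and "lc_unif_conv PV I xs x" and "lc_unif_conv PV I xs' x'"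
    and "\<And>n. parallel_lift PV PW A I (xs n) (xs' n) (\<xi>s n) (\<xi>s' n)"
    and "lc_unif_conv PW I \<xi>s \<xi>"
  shows "\<exists>\<xi>'. parallel_lift PV PW A I x x' \<xi> \<xi>'"
proof -
  have PV: "\<forall>p\<in>PV. seminorm p" and PW: "\<forall>p\<in>PW. seminorm p"
    using lcs_seminorm assms(1,2) by blast+
  have xs: "lc_continuous_conv PV I xs x" and xs': "lc_continuous_conv PV I xs' x'"
    using assms(6,10,11) lc_continuous_on_if_has_derivative[OF PV]
    by (auto intro!: lc_continuous_conv_if_unif_conv[OF PV] simp: lc_C1_on_def)
  have \<xi>s: "lc_continuous_conv PW I \<xi>s \<xi>"
    using assms(12,13) unfolding parallel_lift_def lc_C1_on_def
    by (blast intro: lc_continuous_conv_if_unif_conv[OF PW] lc_continuous_on_if_has_derivative[OF PW])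
  define \<xi>' where "\<xi>' u = - A (x u) (x' u) (\<xi> u)" for u
  have "\<xi>s' n u = - A (xs n u) (xs' n u) (\<xi>s n u)" if "u \<in> I" for n u
    using assms(12)[of n] that unfolding parallel_lift_def by (simp add: eq_neg_iff_add_eq_0)
  with lc_continuous_conv_connection_form[OF assms(4,7,8) xs xs' \<xi>s]
  have \<xi>s': "lc_continuous_conv PW I \<xi>s' \<xi>'"
    unfolding \<xi>'_def by (rule lc_continuous_conv_uminus[OF PW])
  have "lc_has_derivative_on PW I \<xi> \<xi>'"
    using assms(12) lc_continuous_conv_pointwise[OF \<xi>s]
    by (intro lc_has_derivative_on_limit[OF PW assms(5) _ _ \<xi>s']) (auto simp: parallel_lift_def lc_C1_on_def)
  moreover have "lc_continuous_on PW I \<xi>'"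
    by (rule lc_continuous_on_if_continuous_conv[OF PW \<xi>s'])
  ultimately show ?thesis
    unfolding parallel_lift_def lc_C1_on_def \<xi>'_def by auto
qed

end
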